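(* Let $\diamond$ be the operation on $\mathbb{Z}$ given by $x\diamond y=x-\operatorname{sgn}(y-x)$. Then $(\mathbb{Z},\diamond)$ satisfies $\mathrm{x}\simeq(\mathrm{x}\diamond\mathrm{y})\diamond((\mathrm{x}\diamond\mathrm{y})\diamond\mathrm{y})$ but does not satisfy $\mathrm{x}\simeq(\mathrm{x}\diamond(\mathrm{x}\diamond\mathrm{y}))\diamond\mathrm{y}$. Consequently the first law does not imply the second.
   Context: $\operatorname{sgn}(h)$ is $1$ for $h>0$, $-1$ for $h<0$, and $0$ for $h=0$. A magma satisfies a law if the identity holds for all assignments of variables. *)

theory Defs
  imports Main
begin

definition diamond :: "int \<Rightarrow> int \<Rightarrow> int" where
  "diamond x y = x - sgn (y - x)"

definition law1 :: "('a \<Rightarrow> 'a \<Rightarrow> 'a) \<Rightarrow> bool" where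
  "law1 op \<longleftrightarrow> (\<forall>x y. x = op (op x y) (op (op x y) y))"

definition law2 :: "('a \<Rightarrow> 'a \<Rightarrow> 'a) \<Rightarrow> bool" where
  "law2 op \<longleftrightarrow> (\<forall>x y. x = op (op x (op x y)) y)"

end

theory Submission
  imports Defs
begin

text \<open>Setting \<open>d = x \<diamond> y\<close>, the product \<open>d \<diamond> y\<close> moves one further step away from \<open>y\<close>,
  so the outer product steps from \<open>d\<close> back towards \<open>x\<close> and lands on it.\<close>

lemma diamond_less: "x < y \<Longrightarrow> diamond x y = x - 1"
  by (simp add: diamond_def)

lemma diamond_greater: "y < x \<Longrightarrow> diamond x y = x + 1"
  by (simp add: diamond_def)

lemma diamond_idem: "diamond x x = x"
  by (simp add: diamond_def)

lemma law1_diamond: "law1 diamond"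
  unfolding law1_def
proof (intro allI)
  fix x y :: int
  consider "x < y" | "y < x" | "x = y" by linarith
  then show "x = diamond (diamond x y) (diamond (diamond x y) y)"
    by cases (simp_all add: diamond_less diamond_greater diamond_idem)
qed

lemma not_law2_diamond: "\<not> law2 diamond"
proof
  assume "law2 diamond"
  then have "0 = diamond (diamond 0 (diamond 0 1)) 1"
    unfolding law2_def by blast
  also have "\<dots> = 1"
    by (simp add: diamond_less diamond_greater diamond_idem)
  finally show False by simp
qed

theorem mainTheorem14:
  shows "law1 diamond \<and> \<not> law2 diamond \<and>
         \<not> (\<forall>op :: int \<Rightarrow> int \<Rightarrow> int. law1 op \<longrightarrow> law2 op)"
  using law1_diamond not_law2_diamond by blast

end
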